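(* Let $T$ be a tree with a proper 2-coloring $\chi:V\to\{\mathcal{R},\mathcal{B}\}$. The following are equivalent: (1) $T$ is balanced; (2) any two vertices of the same height have the same color under $\chi$; (3) every leaf has the same color.
   Context: A leaf is a vertex of degree 1; the height of a vertex is its minimum distance to a leaf (an isolated vertex has height 0). $T$ is balanced if no two adjacent vertices have the same height. A proper 2-coloring assigns different colors to adjacent vertices. *)

theory Defs
  imports Main
begin

definition simple_graph :: "'a set \<Rightarrow> ('a \<Rightarrow> 'a \<Rightarrow> bool) \<Rightarrow> bool" where
  "simple_graph V E \<longleftrightarrow> finite V \<and> (\<forall>x y. E x y \<longrightarrow> x \<in> V \<and> y \<in> V)
     \<and> (\<forall>x y. E x y \<longrightarrow> E y x) \<and> (\<forall>x. \<not> E x x)"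

definition walk :: "'a set \<Rightarrow> ('a \<Rightarrow> 'a \<Rightarrow> bool) \<Rightarrow> 'a list \<Rightarrow> bool" where
  "walk V E xs \<longleftrightarrow> xs \<noteq> [] \<and> set xs \<subseteq> V \<and>
     (\<forall>i. Suc i < length xs \<longrightarrow> E (xs ! i) (xs ! Suc i))"

definition connected_graph :: "'a set \<Rightarrow> ('a \<Rightarrow> 'a \<Rightarrow> bool) \<Rightarrow> bool" where
  "connected_graph V E \<longleftrightarrow>
     (\<forall>u\<in>V. \<forall>v\<in>V. \<exists>xs. walk V E xs \<and> hd xs = u \<and> last xs = v)"

definition is_cycle :: "'a set \<Rightarrow> ('a \<Rightarrow> 'a \<Rightarrow> bool) \<Rightarrow> 'a list \<Rightarrow> bool" where
  "is_cycle V E xs \<longleftrightarrow> walk V E xs \<and> length xs \<ge> 3 \<and> distinct xs \<and> E (last xs) (hd xs)"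

definition acyclic_graph :: "'a set \<Rightarrow> ('a \<Rightarrow> 'a \<Rightarrow> bool) \<Rightarrow> bool" where
  "acyclic_graph V E \<longleftrightarrow> \<not> (\<exists>xs. is_cycle V E xs)"

definition tree :: "'a set \<Rightarrow> ('a \<Rightarrow> 'a \<Rightarrow> bool) \<Rightarrow> bool" where
  "tree V E \<longleftrightarrow> simple_graph V E \<and> V \<noteq> {} \<and> connected_graph V E \<and> acyclic_graph V E"

definition degree :: "'a set \<Rightarrow> ('a \<Rightarrow> 'a \<Rightarrow> bool) \<Rightarrow> 'a \<Rightarrow> nat" where
  "degree V E v = card {u \<in> V. E v u}"

definition leaf :: "'a set \<Rightarrow> ('a \<Rightarrow> 'a \<Rightarrow> bool) \<Rightarrow> 'a \<Rightarrow> bool" where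
  "leaf V E v \<longleftrightarrow> v \<in> V \<and> degree V E v = 1"

definition dist :: "'a set \<Rightarrow> ('a \<Rightarrow> 'a \<Rightarrow> bool) \<Rightarrow> 'a \<Rightarrow> 'a \<Rightarrow> nat" where
  "dist V E u v = (LEAST n. \<exists>xs. walk V E xs \<and> hd xs = u \<and> last xs = v \<and> length xs = Suc n)"

text \<open>Height: minimum distance to a leaf; 0 if there is no leaf (isolated vertex).\<close>
definition height :: "'a set \<Rightarrow> ('a \<Rightarrow> 'a \<Rightarrow> bool) \<Rightarrow> 'a \<Rightarrow> nat" where
  "height V E v = (if {l. leaf V E l} = {} then 0 else Min (dist V E v ` {l. leaf V E l}))"

definition balanced :: "'a set \<Rightarrow> ('a \<Rightarrow> 'a \<Rightarrow> bool) \<Rightarrow> bool" where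
  "balanced V E \<longleftrightarrow> (\<forall>u v. E u v \<longrightarrow> height V E u \<noteq> height V E v)"

datatype color = Red | Blue

definition proper_2_coloring :: "'a set \<Rightarrow> ('a \<Rightarrow> 'a \<Rightarrow> bool) \<Rightarrow> ('a \<Rightarrow> color) \<Rightarrow> bool" where
  "proper_2_coloring V E \<chi> \<longleftrightarrow> (\<forall>u v. E u v \<longrightarrow> \<chi> u \<noteq> \<chi> v)"

end

(* Heights of adjacent vertices differ by at most one, since a walk to a nearest leaf can be
   extended by one edge. So a tree is balanced iff the parity of the height flips along every
   edge, i.e. iff height parity is itself a proper 2-coloring. Two functions that both flip along
   every edge agree or disagree at the two ends of a walk according to its length alone, and the
   tree is connected: this gives (1) => (2). For (3) => (2), colors along a shortest walk from u to
   a nearest leaf show that u has the leaf color iff its height is even. A finite acyclic graph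
   with an edge has a leaf (an end of a longest path); a tree without edges is a single vertex. *)

theory Submission
  imports Defs
begin

lemma walk_Cons:
  assumes "xs \<noteq> []"
  shows "walk V E (w # xs) \<longleftrightarrow> w \<in> V \<and> E w (hd xs) \<and> walk V E xs"
proof -
  have "(\<forall>i. Suc i < length (w # xs) \<longrightarrow> E ((w # xs) ! i) ((w # xs) ! Suc i))
      \<longleftrightarrow> E w (hd xs) \<and> (\<forall>i. Suc i < length xs \<longrightarrow> E (xs ! i) (xs ! Suc i))"
    (is "?steps_Cons \<longleftrightarrow> _ \<and> ?steps")
  proof
    assume steps_Cons: ?steps_Cons
    have "E (xs ! i) (xs ! Suc i)" if "Suc i < length xs" for i
      using steps_Cons[rule_format, of "Suc i"] that by simp
    with steps_Cons[rule_format, of 0] assms show "E w (hd xs) \<and> ?steps"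
      by (simp add: hd_conv_nth)
  next
    assume steps: "E w (hd xs) \<and> ?steps"
    show ?steps_Cons
    proof (intro allI impI)
      fix i
      assume "Suc i < length (w # xs)"
      with steps assms show "E ((w # xs) ! i) ((w # xs) ! Suc i)"
        by (cases i) (auto simp: hd_conv_nth)
    qed
  qed
  with assms show ?thesis
    unfolding walk_def by auto
qed

lemma walk_singleton [simp]: "walk V E [x] \<longleftrightarrow> x \<in> V"
  unfolding walk_def by auto

lemma walk_take:
  assumes "walk V E xs" and "0 < n"
  shows "walk V E (take n xs)"
  using assms unfolding walk_def by (auto dest: in_set_takeD)

(* Walks are vertex lists: odd length means an even number of edges. *)
lemma walk_flip_parity:
  fixes P :: "'a \<Rightarrow> bool"
  assumes flip: "\<And>x y. E x y \<Longrightarrow> P x \<noteq> P y" and "walk V E ws"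
  shows "P (hd ws) = P (last ws) \<longleftrightarrow> odd (length ws)"
  using assms(2)
proof (induction ws rule: induct_list012)
  case 1
  then show ?case by (simp add: walk_def)
next
  case (2 x)
  then show ?case by simp
next
  case (3 x y zs)
  then have "E x y" and "walk V E (y # zs)"
    by (simp_all add: walk_Cons)
  with 3 flip[of x y] show ?case by auto
qed

lemma proper_2_coloring_walk:
  assumes "proper_2_coloring V E \<chi>" and "walk V E ws"
  shows "\<chi> (hd ws) = \<chi> (last ws) \<longleftrightarrow> odd (length ws)"
proof -
  have same_color: "\<chi> x = \<chi> y \<longleftrightarrow> (\<chi> x = Red) = (\<chi> y = Red)" for x y
    by (cases "\<chi> x"; cases "\<chi> y") simp_all
  have "(\<chi> x = Red) \<noteq> (\<chi> y = Red)" if "E x y" for x y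
    using assms(1) that same_color unfolding proper_2_coloring_def by blast
  from walk_flip_parity[of E "\<lambda>x. \<chi> x = Red", OF this assms(2)] show ?thesis
    using same_color by simp
qed

lemma connected_edgeless_eq:
  assumes "connected_graph V E" and "\<And>x y. \<not> E x y" and "u \<in> V" and "v \<in> V"
  shows "u = v"
proof -
  obtain ws where ws: "walk V E ws" "hd ws = u" "last ws = v"
    using assms(1,3,4) unfolding connected_graph_def by blast
  have "length ws = 1"
    using ws(1) assms(2) unfolding walk_def by (cases ws) (auto simp: neq_Nil_conv)
  with ws show ?thesis by (cases ws) auto
qed

lemma dist_less_length_walk:
  assumes "walk V E ws" and "hd ws = u" and "last ws = v"
  shows "dist V E u v < length ws"
proof -
  have "length ws = Suc (length ws - 1)"
    using assms(1) unfolding walk_def by simp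
  with assms have "\<exists>xs. walk V E xs \<and> hd xs = u \<and> last xs = v \<and> length xs = Suc (length ws - 1)"
    by blast
  then have "dist V E u v \<le> length ws - 1"
    unfolding dist_def by (rule Least_le)
  moreover have "0 < length ws"
    using assms(1) unfolding walk_def by simp
  ultimately show ?thesis by linarith
qed

lemma shortest_walk_exists:
  assumes "connected_graph V E" and "u \<in> V" and "v \<in> V"
  obtains ws where "walk V E ws" "hd ws = u" "last ws = v" "length ws = Suc (dist V E u v)"
proof -
  obtain ws where ws: "walk V E ws" "hd ws = u" "last ws = v"
    using assms unfolding connected_graph_def by blast
  then have "length ws = Suc (length ws - 1)"
    unfolding walk_def by simp
  with ws have "\<exists>n ws. walk V E ws \<and> hd ws = u \<and> last ws = v \<and> length ws = Suc n"
    by blast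
  then have "\<exists>ws. walk V E ws \<and> hd ws = u \<and> last ws = v \<and> length ws = Suc (dist V E u v)"
    unfolding dist_def by (rule LeastI_ex)
  with that show ?thesis by blast
qed

lemma finite_leaves: "finite V \<Longrightarrow> finite {l. leaf V E l}"
  unfolding leaf_def by simp

lemma height_eq_Min:
  assumes "leaf V E l"
  shows "height V E u = Min (dist V E u ` {l. leaf V E l})"
  using assms unfolding height_def by auto

lemma height_le_dist:
  assumes "finite V" and "leaf V E l"
  shows "height V E u \<le> dist V E u l"
  using height_eq_Min[OF assms(2)] finite_leaves[OF assms(1)] assms(2) by simp

lemma height_attained:
  assumes "finite V" and "leaf V E l"
  obtains l' where "leaf V E l'" "height V E u = dist V E u l'"
proof -
  have "Min (dist V E u ` {l. leaf V E l}) \<in> dist V E u ` {l. leaf V E l}"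
    using finite_leaves[OF assms(1)] assms(2) by (intro Min_in) auto
  then show ?thesis
    using height_eq_Min[OF assms(2)] that by auto
qed

lemma height_leaf:
  assumes "finite V" and "leaf V E l"
  shows "height V E l = 0"
proof -
  have "dist V E l l < length [l]"
    using assms(2) by (intro dist_less_length_walk) (simp_all add: leaf_def)
  with height_le_dist[OF assms, of l] show ?thesis by simp
qed

lemma walk_to_nearest_leaf:
  assumes "simple_graph V E" "connected_graph V E" and "leaf V E l" and "u \<in> V"
  obtains ws where "walk V E ws" "hd ws = u" "leaf V E (last ws)"
    "length ws = Suc (height V E u)"
proof -
  have "finite V" using assms(1) unfolding simple_graph_def by simp
  then obtain l' where l': "leaf V E l'" "height V E u = dist V E u l'"
    using height_attained[OF _ assms(3)] by blast
  then have "l' \<in> V" unfolding leaf_def by simp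
  then obtain ws where "walk V E ws" "hd ws = u" "last ws = l'" "length ws = Suc (dist V E u l')"
    by (rule shortest_walk_exists[OF assms(2,4)])
  with l' show ?thesis by (intro that) simp_all
qed

lemma height_adjacent_le:
  assumes "simple_graph V E" "connected_graph V E" and "E u v"
  shows "height V E u \<le> Suc (height V E v)"
proof (cases "\<exists>l. leaf V E l")
  case False
  then show ?thesis unfolding height_def by simp
next
  case True
  then obtain l where l: "leaf V E l" by blast
  have uv: "u \<in> V" "v \<in> V" "finite V"
    using assms(1,3) unfolding simple_graph_def by auto
  obtain ws where ws: "walk V E ws" "hd ws = v" "leaf V E (last ws)"
    "length ws = Suc (height V E v)"
    by (rule walk_to_nearest_leaf[OF assms(1,2) l uv(2)])
  then have "ws \<noteq> []" by auto
  with ws uv assms(3) have "walk V E (u # ws)"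
    by (simp add: walk_Cons)
  then have "dist V E u (last ws) < Suc (length ws)"
    using dist_less_length_walk[of V E "u # ws"] \<open>ws \<noteq> []\<close> by simp
  with height_le_dist[OF uv(3) ws(3), of u] ws(4) show ?thesis by simp
qed

lemma acyclic_neighbour_on_path:
  assumes "simple_graph V E" "acyclic_graph V E"
    and "walk V E xs" "distinct xs" and "E (hd xs) u" and "u \<in> set xs"
  shows "u = xs ! 1"
proof (rule ccontr)
  assume "u \<noteq> xs ! 1"
  obtain j where j: "j < length xs" "xs ! j = u"
    using assms(6) by (auto simp: in_set_conv_nth)
  have "xs \<noteq> []" using assms(6) by auto
  moreover have "u \<noteq> hd xs"
    using assms(1,5) unfolding simple_graph_def by auto
  ultimately have "j \<noteq> 0"
    using j by (metis hd_conv_nth)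
  moreover have "j \<noteq> 1"
    using \<open>u \<noteq> xs ! 1\<close> j by auto
  ultimately have "2 \<le> j" by linarith
  let ?c = "take (Suc j) xs"
  have "walk V E ?c"
    using walk_take[OF assms(3)] by simp
  moreover have "3 \<le> length ?c" "distinct ?c"
    using j \<open>2 \<le> j\<close> assms(4) by simp_all
  moreover have "last ?c = u"
    using j by (simp add: take_Suc_conv_app_nth)
  moreover have "hd ?c = hd xs"
    by (simp add: hd_take)
  moreover have "E u (hd xs)"
    using assms(1,5) unfolding simple_graph_def by blast
  ultimately have "is_cycle V E ?c"
    unfolding is_cycle_def by simp
  with assms(2) show False unfolding acyclic_graph_def by blast
qed

lemma acyclic_graph_has_leaf:
  assumes "simple_graph V E" "acyclic_graph V E" and "E a b"
  obtains l where "leaf V E l"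
proof -
  let ?path = "\<lambda>xs. walk V E xs \<and> distinct xs"
  have sym: "\<And>x y. E x y \<Longrightarrow> E y x" and irrefl: "\<And>x. \<not> E x x"
    and inV: "\<And>x y. E x y \<Longrightarrow> x \<in> V \<and> y \<in> V" and "finite V"
    using assms(1) unfolding simple_graph_def by auto
  have path_ab: "?path [a, b]"
    using assms(3) inV irrefl by (auto simp: walk_Cons)
  have "length xs < Suc (card V)" if "?path xs" for xs
  proof -
    from that have "set xs \<subseteq> V" "distinct xs"
      unfolding walk_def by auto
    with card_mono[OF \<open>finite V\<close>] distinct_card show ?thesis
      by (metis less_Suc_eq_le)
  qed
  then obtain xs where xs: "?path xs" and longest: "\<And>ys. ?path ys \<Longrightarrow> length ys \<le> length xs"
    using ex_has_greatest_nat[of ?path "[a, b]" length, OF path_ab] by blast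
  have "2 \<le> length xs" using longest[OF path_ab] by simp
  then have xs_ne: "xs \<noteq> []" and first_edge: "E (hd xs) (xs ! 1)"
    using xs unfolding walk_def by (auto simp: hd_conv_nth)
  (* A neighbour off the path would extend it; one further along the path would close a cycle. *)
  have "u = xs ! 1" if "E (hd xs) u" for u
  proof -
    have "u \<in> set xs"
    proof (rule ccontr)
      assume "u \<notin> set xs"
      with xs xs_ne that sym inV have "?path (u # xs)"
        by (auto simp: walk_Cons)
      with longest[of "u # xs"] show False by simp
    qed
    with xs that show ?thesis
      using acyclic_neighbour_on_path[OF assms(1,2)] by blast
  qed
  then have "{u \<in> V. E (hd xs) u} = {xs ! 1}"
    using first_edge inV by blast
  then have "leaf V E (hd xs)"
    using inV[OF first_edge] unfolding leaf_def degree_def by simp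
  then show ?thesis by (rule that)
qed

lemma balanced_height_parity_flips:
  assumes "simple_graph V E" "connected_graph V E" "balanced V E" and "E u v"
  shows "even (height V E u) \<noteq> even (height V E v)"
proof -
  have "E v u" using assms(1,4) unfolding simple_graph_def by blast
  have "height V E u \<noteq> height V E v"
    using assms(3,4) unfolding balanced_def by blast
  moreover have "height V E u \<le> Suc (height V E v)" "height V E v \<le> Suc (height V E u)"
    using height_adjacent_le[OF assms(1,2)] assms(4) \<open>E v u\<close> by auto
  ultimately have "height V E u = Suc (height V E v) \<or> height V E v = Suc (height V E u)"
    by linarith
  then show ?thesis by auto
qed

lemma balanced_same_height_same_color:
  assumes "simple_graph V E" "connected_graph V E" "proper_2_coloring V E \<chi>" "balanced V E"
    and "u \<in> V" "v \<in> V" "height V E u = height V E v"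
  shows "\<chi> u = \<chi> v"
proof -
  obtain ws where ws: "walk V E ws" "hd ws = u" "last ws = v"
    using assms(2,5,6) unfolding connected_graph_def by blast
  have "odd (length ws)"
    using walk_flip_parity[of E "\<lambda>x. even (height V E x)", OF _ ws(1)]
      balanced_height_parity_flips[OF assms(1,2,4)] ws(2,3) assms(7) by simp
  with proper_2_coloring_walk[OF assms(3) ws(1)] ws(2,3) show ?thesis by simp
qed

lemma color_by_height_parity:
  assumes "simple_graph V E" "connected_graph V E" "proper_2_coloring V E \<chi>"
    and leaves_same_color: "\<And>l l'. leaf V E l \<Longrightarrow> leaf V E l' \<Longrightarrow> \<chi> l = \<chi> l'"
    and "leaf V E l" "u \<in> V"
  shows "\<chi> u = \<chi> l \<longleftrightarrow> even (height V E u)"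
proof -
  obtain ws where ws: "walk V E ws" "hd ws = u" "leaf V E (last ws)"
    "length ws = Suc (height V E u)"
    using walk_to_nearest_leaf[OF assms(1,2,5,6)] by blast
  with proper_2_coloring_walk[OF assms(3) ws(1)] leaves_same_color[OF ws(3) assms(5)]
  show ?thesis by simp
qed

lemma leaves_same_color_imp_same_height_same_color:
  assumes "tree V E" "proper_2_coloring V E \<chi>"
    and "\<And>l l'. leaf V E l \<Longrightarrow> leaf V E l' \<Longrightarrow> \<chi> l = \<chi> l'"
    and "u \<in> V" "v \<in> V" "height V E u = height V E v"
  shows "\<chi> u = \<chi> v"
proof (cases "\<exists>l. leaf V E l")
  case True
  then obtain l where "leaf V E l" by blast
  have graph: "simple_graph V E" "connected_graph V E"
    using assms(1) unfolding tree_def by auto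
  have "\<chi> u = \<chi> l \<longleftrightarrow> even (height V E u)" "\<chi> v = \<chi> l \<longleftrightarrow> even (height V E v)"
    using color_by_height_parity[OF graph assms(2,3) \<open>leaf V E l\<close>] assms(4,5) by blast+
  with assms(6) have "(\<chi> u = \<chi> l) = (\<chi> v = \<chi> l)" by simp
  then show ?thesis
    by (cases "\<chi> u"; cases "\<chi> v"; cases "\<chi> l") simp_all
next
  case False
  with assms(1) have "\<not> E x y" for x y
    using acyclic_graph_has_leaf[of V E x y] unfolding tree_def by blast
  with assms(1) have "u = v"
    using connected_edgeless_eq[of V E u v] assms(4,5) unfolding tree_def by blast
  then show ?thesis by simp
qed

theorem proposition3p17:
  fixes V :: "'a set" and E :: "'a \<Rightarrow> 'a \<Rightarrow> bool" and \<chi> :: "'a \<Rightarrow> color"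
  assumes "tree V E" and "proper_2_coloring V E \<chi>"
  shows "(balanced V E \<longleftrightarrow>
            (\<forall>u\<in>V. \<forall>v\<in>V. height V E u = height V E v \<longrightarrow> \<chi> u = \<chi> v))
       \<and> ((\<forall>u\<in>V. \<forall>v\<in>V. height V E u = height V E v \<longrightarrow> \<chi> u = \<chi> v) \<longleftrightarrow>
            (\<forall>l l'. leaf V E l \<longrightarrow> leaf V E l' \<longrightarrow> \<chi> l = \<chi> l'))"
proof -
  have graph: "simple_graph V E" "connected_graph V E"
    using assms(1) unfolding tree_def by auto
  then have "finite V" and edge_in_V: "\<And>u v. E u v \<Longrightarrow> u \<in> V \<and> v \<in> V"
    unfolding simple_graph_def by auto
  have "balanced V E" if "\<forall>u\<in>V. \<forall>v\<in>V. height V E u = height V E v \<longrightarrow> \<chi> u = \<chi> v"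
    using that assms(2) edge_in_V unfolding balanced_def proper_2_coloring_def by blast
  moreover have "\<chi> l = \<chi> l'"
    if "\<forall>u\<in>V. \<forall>v\<in>V. height V E u = height V E v \<longrightarrow> \<chi> u = \<chi> v" "leaf V E l" "leaf V E l'"
    for l l'
    using that height_leaf[OF \<open>finite V\<close> that(2)] height_leaf[OF \<open>finite V\<close> that(3)]
    unfolding leaf_def by auto
  ultimately show ?thesis
    using balanced_same_height_same_color[OF graph assms(2)]
      leaves_same_color_imp_same_height_same_color[OF assms]
    by blast
qed

end
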